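(* Let $k\ge 2$, $n\ge 3$, $M=\{0,1,\dots,k-1\}$, and consider the positions $p\in M^n$ with the moves and the notation $B(p)$, $\bar x$, $T(m;j_1,\dots,j_{n-m})$ described in the context. (1) $M^n$ is the disjoint union of the trivial classes $(m)=\{p: |B(p)|=m\}$, $0\le m\le n$. (2) The sets $T(m;j_1,\dots,j_{n-m})$, for $1\le m\le n$ and integers $1\le j_1\le\dots\le j_{n-m}\le\lfloor (k-1)/2\rfloor$, are pairwise disjoint and cover all external positions. If it is not the case that ($m=1$ and $j_1<j_2<\dots<j_{n-1}<(k-1)/2$), then $T(m;j_1,\dots,j_{n-m})$ is exactly one connectivity class. If $m=1$ and $j_1<j_2<\dots<j_{n-1}<(k-1)/2$ (here $(k-1)/2$ need not be an integer), then $T(1;j_1,\dots,j_{n-1})$ is the union of exactly two connectivity classes: the set of its positions connected to $(0,j_1,\dots,j_{n-1})$, and the set of its positions not connected to it (which contains $(k-1,j_1,\dots,j_{n-1})$). Moreover, integers $1\le j_1<\dots<j_{n-1}<(k-1)/2$ exist only if $k\ge 2n$.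
   Context: Fix integers $k\ge 2$ (edge length) and $n\ge 3$ (dimension), $M=\{0,\dots,k-1\}$. A position is $p=(p_1,\dots,p_n)\in M^n$; the cubie in position $p$ occupies $\prod_i[p_i,p_i+1]\subset[0,k]^n$. Let $B(p)=\{i: p_i\in\{0,k-1\}\}$; $p$ is external if $B(p)\neq\emptyset$. For distinct $i,j\in\{1,\dots,n\}$ define $\psi_{i,j}:M^n\to M^n$ by $(\psi_{i,j}p)_i=k-1-p_j$, $(\psi_{i,j}p)_j=p_i$, $(\psi_{i,j}p)_l=p_l$ for $l\notin\{i,j\}$. A move is given by distinct $i,j$ and constants $c_l\in M$ ($l\notin\{i,j\}$): it sends every position $p$ with $p_l=c_l$ for all $l\notin\{i,j\}$ to $\psi_{i,j}(p)$ and fixes all other positions (rotation of a 2-dimensional layer; rotations of higher-dimensional layers are compositions of such moves). A combination is a finite sequence of moves, regarded as the composite permutation of $M^n$. Two positions are connected if some combination sends one to the other; connectivity classes are the resulting equivalence classes. For $x\in\{1,\dots,k-2\}$ put $\bar x=\min(x,k-1-x)$. For $1\le m\le n$ and $1\le j_1\le\dots\le j_{n-m}\le\lfloor (k-1)/2\rfloor$, $T(m;j_1,\dots,j_{n-m})$ is the set of positions $p$ with $|B(p)|=m$ such that the multiset $\{\bar p_i: i\notin B(p)\}$ equals $\{j_1,\dots,j_{n-m}\}$ (for $m=n$ the list is empty and $T$ is the set of all $p$ with $|B(p)|=n$). *)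

theory Defs
  imports Main "HOL-Library.Multiset"
begin

text \<open>Coordinates are indexed 0..n-1 (instead of 1..n); a position is a list of length n
  with entries in M = {0..k-1}.\<close>

definition positions :: "nat \<Rightarrow> nat \<Rightarrow> nat list set" where
  "positions k n = {p. length p = n \<and> (\<forall>x\<in>set p. x < k)}"

definition bdry :: "nat \<Rightarrow> nat list \<Rightarrow> nat set" where
  "bdry k p = {i. i < length p \<and> (p ! i = 0 \<or> p ! i = k - 1)}"

definition psi :: "nat \<Rightarrow> nat \<Rightarrow> nat \<Rightarrow> nat list \<Rightarrow> nat list" where
  "psi k i j p = p[i := k - 1 - p ! j, j := p ! i]"

definition is_move :: "nat \<Rightarrow> nat \<Rightarrow> nat \<times> nat \<times> (nat \<Rightarrow> nat) \<Rightarrow> bool" where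
  "is_move k n mv = (case mv of (i, j, c) \<Rightarrow>
      i < n \<and> j < n \<and> i \<noteq> j \<and> (\<forall>l<n. l \<noteq> i \<and> l \<noteq> j \<longrightarrow> c l < k))"

definition apply_move :: "nat \<Rightarrow> nat \<Rightarrow> nat \<times> nat \<times> (nat \<Rightarrow> nat) \<Rightarrow> nat list \<Rightarrow> nat list" where
  "apply_move k n mv p = (case mv of (i, j, c) \<Rightarrow>
      if (\<forall>l<n. l \<noteq> i \<and> l \<noteq> j \<longrightarrow> p ! l = c l) then psi k i j p else p)"

definition apply_comb :: "nat \<Rightarrow> nat \<Rightarrow> (nat \<times> nat \<times> (nat \<Rightarrow> nat)) list \<Rightarrow> nat list \<Rightarrow> nat list" where
  "apply_comb k n ms p = foldl (\<lambda>q mv. apply_move k n mv q) p ms"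

definition connected_pos :: "nat \<Rightarrow> nat \<Rightarrow> nat list \<Rightarrow> nat list \<Rightarrow> bool" where
  "connected_pos k n p q = (\<exists>ms. (\<forall>mv\<in>set ms. is_move k n mv) \<and> apply_comb k n ms p = q)"

definition conn_rel :: "nat \<Rightarrow> nat \<Rightarrow> (nat list \<times> nat list) set" where
  "conn_rel k n = {(p, q). p \<in> positions k n \<and> q \<in> positions k n \<and> connected_pos k n p q}"

definition conn_classes :: "nat \<Rightarrow> nat \<Rightarrow> nat list set set" where
  "conn_classes k n = positions k n // conn_rel k n"

definition bar :: "nat \<Rightarrow> nat \<Rightarrow> nat" where
  "bar k x = min x (k - 1 - x)"

definition Tset :: "nat \<Rightarrow> nat \<Rightarrow> nat \<Rightarrow> nat list \<Rightarrow> nat list set" where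
  "Tset k n m js = {p \<in> positions k n. card (bdry k p) = m \<and>
      image_mset (\<lambda>i. bar k (p ! i)) (mset_set ({0..<n} - bdry k p)) = mset js}"

definition admissible :: "nat \<Rightarrow> nat \<Rightarrow> nat \<Rightarrow> nat list \<Rightarrow> bool" where
  "admissible k n m js = (1 \<le> m \<and> m \<le> n \<and> length js = n - m \<and> sorted js \<and>
      (\<forall>j\<in>set js. 1 \<le> j \<and> j \<le> (k - 1) div 2))"

definition exceptional :: "nat \<Rightarrow> nat \<Rightarrow> nat list \<Rightarrow> bool" where
  "exceptional k m js = (m = 1 \<and> sorted_wrt (<) js \<and> (\<forall>j\<in>set js. 2 * j < k - 1))"

end

theory Submission
  imports Defs "HOL-Combinatorics.Permutations"
begin

text \<open>A move \<open>\<psi>\<^sub>i\<^sub>j\<close> swaps coordinates i and j and reflects one of them (x \<mapsto> k - 1 - x), so it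
  permutes the vector of bar-values; hence the multiset of these values, which determines the
  T-set of a position, is invariant and every T-set is a union of classes. Conversely,
  \<open>\<psi>\<^sub>i\<^sub>j\<close> applied twice reflects coordinates i and j simultaneously. Therefore, up to a reflection
  of coordinate 0, every position can be folded into the lower half and then sorted: every position
  of T(m; js) is connected to c = (0,...,0,js) or to its reflection in coordinate 0. The two
  coincide as soon as a single coordinate can be reflected, which happens when two coordinates of c
  are equal (m \<ge> 2 or a repeated j) or when some j lies exactly in the middle (2j = k - 1).
  In the remaining, exceptional, case the bar-values are distinct and never in the middle; then
  sign(\<sigma>) (-1)^(number of coordinates above the middle) is invariant, where \<sigma> is the permutation
  carrying the bar-vector of the start to the current one, and it separates c from its
  reflection.\<close>

section \<open>Connectivity\<close>

lemma positions_iff_nth: "p \<in> positions k n \<longleftrightarrow> length p = n \<and> (\<forall>l<n. p ! l < k)"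
  unfolding positions_def by (auto simp: all_set_conv_all_nth)

lemma psi_in_positions:
  assumes "p \<in> positions k n" "i < n" "j < n" "k \<ge> 1"
  shows "psi k i j p \<in> positions k n"
  using assms by (auto simp: positions_iff_nth psi_def nth_list_update)

lemma connected_pos_refl: "connected_pos k n p p"
  unfolding connected_pos_def by (rule exI[of _ "[]"]) (simp add: apply_comb_def)

lemma connected_pos_trans:
  "connected_pos k n p q \<Longrightarrow> connected_pos k n q r \<Longrightarrow> connected_pos k n p r"
  unfolding connected_pos_def apply_comb_def by (metis Un_iff foldl_append set_append)

lemma connected_pos_psi:
  assumes "p \<in> positions k n" "i < n" "j < n" "i \<noteq> j"
  shows "connected_pos k n p (psi k i j p)"
proof -
  have "is_move k n (i, j, (!) p)" using assms by (auto simp: is_move_def positions_iff_nth)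
  moreover have "apply_move k n (i, j, (!) p) p = psi k i j p" by (simp add: apply_move_def)
  ultimately show ?thesis
    unfolding connected_pos_def apply_comb_def by (intro exI[of _ "[(i, j, (!) p)]"]) simp
qed

lemma apply_move_cases:
  assumes "is_move k n mv"
  shows "apply_move k n mv p = p \<or> (\<exists>i j. i < n \<and> j < n \<and> i \<noteq> j \<and> apply_move k n mv p = psi k i j p)"
  using assms unfolding is_move_def apply_move_def by (cases mv) auto

lemma connected_pos_induct:
  assumes "connected_pos k n p q" "p \<in> positions k n" "k \<ge> 1" "P p"
    and step: "\<And>x i j. x \<in> positions k n \<Longrightarrow> P x \<Longrightarrow> i < n \<Longrightarrow> j < n \<Longrightarrow> i \<noteq> j
      \<Longrightarrow> P (psi k i j x)"
  shows "P q"
proof -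
  obtain ms where ms: "\<forall>mv\<in>set ms. is_move k n mv" "apply_comb k n ms p = q"
    using assms(1) unfolding connected_pos_def by blast
  have "apply_comb k n ms x \<in> positions k n \<and> P (apply_comb k n ms x)"
    if "x \<in> positions k n" "P x" for x
    using ms(1) that
  proof (induction ms arbitrary: x)
    case Nil
    then show ?case by (simp add: apply_comb_def)
  next
    case (Cons mv ms)
    have "apply_move k n mv x \<in> positions k n \<and> P (apply_move k n mv x)"
      using apply_move_cases[of k n mv x] Cons.prems psi_in_positions step \<open>k \<ge> 1\<close> by auto
    then show ?case using Cons.IH Cons.prems(1) by (simp add: apply_comb_def)
  qed
  then show ?thesis using ms(2) assms(2,4) by blast
qed

lemma connected_pos_in_positions:
  assumes "connected_pos k n p q" "p \<in> positions k n" "k \<ge> 1"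
  shows "q \<in> positions k n"
  by (rule connected_pos_induct[where P = "\<lambda>x. x \<in> positions k n", OF assms assms(2)])
    (use assms(3) psi_in_positions in blast)

lemma psi_order_four:
  assumes "p \<in> positions k n" "i < n" "j < n" "i \<noteq> j"
  shows "psi k i j (psi k i j (psi k i j (psi k i j p))) = p"
  using assms by (intro nth_equalityI) (auto simp: positions_iff_nth psi_def nth_list_update)

lemma connected_pos_psi_inverse:
  assumes "p \<in> positions k n" "i < n" "j < n" "i \<noteq> j" "k \<ge> 1"
  shows "connected_pos k n (psi k i j p) p"
proof -
  let ?f = "psi k i j"
  have "connected_pos k n (?f p) (?f (?f (?f (?f p))))"
    by (meson assms connected_pos_psi connected_pos_trans psi_in_positions)
  then show ?thesis using psi_order_four[OF assms(1-4)] by simp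
qed

lemma connected_pos_sym:
  assumes "connected_pos k n p q" "p \<in> positions k n" "k \<ge> 1"
  shows "connected_pos k n q p"
  by (rule connected_pos_induct[where P = "\<lambda>x. connected_pos k n x p", OF assms connected_pos_refl])
    (meson assms(3) connected_pos_psi_inverse connected_pos_trans)

section \<open>Reflections of single coordinates\<close>

definition flip_coord :: "nat \<Rightarrow> nat \<Rightarrow> nat list \<Rightarrow> nat list" where
  "flip_coord k i p = p[i := k - 1 - p ! i]"

lemma flip_coord_in_positions: "p \<in> positions k n \<Longrightarrow> k \<ge> 1 \<Longrightarrow> flip_coord k i p \<in> positions k n"
  by (cases "i < n") (auto simp: positions_iff_nth flip_coord_def nth_list_update)

lemma flip_coord_flip_coord: "p \<in> positions k n \<Longrightarrow> flip_coord k i (flip_coord k i p) = p"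
  by (cases "i < n") (auto simp: positions_iff_nth flip_coord_def intro: nth_equalityI)

lemma flip_coord_commute: "flip_coord k i (flip_coord k j p) = flip_coord k j (flip_coord k i p)"
  by (cases "i = j") (auto simp: flip_coord_def nth_list_update list_update_swap)

lemma permute_list_in_positions:
  "\<pi> permutes {..<n} \<Longrightarrow> p \<in> positions k n \<Longrightarrow> permute_list \<pi> p \<in> positions k n"
  by (auto simp: positions_def)

lemma psi_psi:
  "i < length p \<Longrightarrow> j < length p \<Longrightarrow> i \<noteq> j \<Longrightarrow>
    psi k i j (psi k i j p) = flip_coord k i (flip_coord k j p)"
  by (intro nth_equalityI) (auto simp: psi_def flip_coord_def nth_list_update)

lemma psi_eq_flip_coord_transpose:
  "i < length p \<Longrightarrow> j < length p \<Longrightarrow> i \<noteq> j \<Longrightarrow>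
    psi k i j p = flip_coord k i (permute_list (Transposition.transpose i j) p)"
  by (intro nth_equalityI) (auto simp: psi_def flip_coord_def permute_list_def nth_list_update)

lemma permute_list_transpose_flip_coord:
  "i < length p \<Longrightarrow> j < length p \<Longrightarrow> a < length p \<Longrightarrow>
    permute_list (Transposition.transpose i j) (flip_coord k a p)
      = flip_coord k (Transposition.transpose i j a) (permute_list (Transposition.transpose i j) p)"
  by (intro nth_equalityI)
    (auto simp: flip_coord_def permute_list_def nth_list_update transpose_def)

lemma connected_pos_flip_coord_pair:
  assumes "v \<in> positions k n" "i < n" "j < n" "i \<noteq> j" "k \<ge> 1"
  shows "connected_pos k n v (flip_coord k i (flip_coord k j v))"
proof -
  have "connected_pos k n v (psi k i j (psi k i j v))"
    by (meson assms connected_pos_psi connected_pos_trans psi_in_positions)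
  then show ?thesis using assms psi_psi by (metis positions_iff_nth)
qed

definition connected_up_to_flip0 :: "nat \<Rightarrow> nat \<Rightarrow> nat list \<Rightarrow> nat list \<Rightarrow> bool" where
  "connected_up_to_flip0 k n p v \<longleftrightarrow> connected_pos k n p v \<or> connected_pos k n p (flip_coord k 0 v)"

lemma connected_up_to_flip0_flip_coord:
  assumes "connected_up_to_flip0 k n p v" "v \<in> positions k n" "a < n" "k \<ge> 1"
  shows "connected_up_to_flip0 k n p (flip_coord k a v)"
proof (cases "a = 0")
  case True
  then show ?thesis
    using assms flip_coord_flip_coord unfolding connected_up_to_flip0_def by metis
next
  case False
  have v0: "flip_coord k 0 v \<in> positions k n" using assms flip_coord_in_positions by blast
  consider "connected_pos k n p v" | "connected_pos k n p (flip_coord k 0 v)"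
    using assms(1) unfolding connected_up_to_flip0_def by blast
  then show ?thesis
  proof cases
    case 1
    then have "connected_pos k n p (flip_coord k a (flip_coord k 0 v))"
      using connected_pos_flip_coord_pair[OF assms(2,3) _ False assms(4)] assms(3)
        connected_pos_trans by auto
    then show ?thesis unfolding connected_up_to_flip0_def by (simp add: flip_coord_commute)
  next
    case 2
    then have "connected_pos k n p (flip_coord k a (flip_coord k 0 (flip_coord k 0 v)))"
      using connected_pos_flip_coord_pair[OF v0 assms(3) _ False assms(4)] assms(3)
        connected_pos_trans by auto
    then show ?thesis
      unfolding connected_up_to_flip0_def using flip_coord_flip_coord assms(2) by metis
  qed
qed

lemma connected_up_to_flip0_transpose:
  assumes "connected_up_to_flip0 k n p v" "v \<in> positions k n" "i < n" "j < n" "k \<ge> 1"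
  shows "connected_up_to_flip0 k n p (permute_list (Transposition.transpose i j) v)"
proof (cases "i = j")
  case True
  then show ?thesis using assms(1) by simp
next
  case False
  let ?t = "Transposition.transpose i j"
  have t: "?t permutes {..<n}" using assms(3,4) by (simp add: permutes_swap_id)
  have swap: "connected_up_to_flip0 k n p (permute_list ?t w)"
    if "connected_pos k n p w" "w \<in> positions k n" for w
  proof -
    have w': "permute_list ?t w \<in> positions k n" using permute_list_in_positions t that(2) .
    have "connected_pos k n p (psi k i j w)"
      using that connected_pos_psi connected_pos_trans False assms(3,4) by blast
    then have "connected_up_to_flip0 k n p (flip_coord k i (permute_list ?t w))"
      unfolding connected_up_to_flip0_def
      using psi_eq_flip_coord_transpose that(2) False assms(3,4) by (metis positions_iff_nth)
    then have "connected_up_to_flip0 k n p (flip_coord k i (flip_coord k i (permute_list ?t w)))"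
      using connected_up_to_flip0_flip_coord flip_coord_in_positions w' assms(3,5) by blast
    then show ?thesis using flip_coord_flip_coord w' by metis
  qed
  consider "connected_pos k n p v" | "connected_pos k n p (flip_coord k 0 v)"
    using assms(1) unfolding connected_up_to_flip0_def by blast
  then show ?thesis
  proof cases
    case 1
    then show ?thesis using swap assms(2) by blast
  next
    case 2
    let ?a = "?t 0"
    have a: "?a < n" using assms(3,4) by (auto simp: transpose_def)
    have tv: "permute_list ?t v \<in> positions k n" using permute_list_in_positions t assms(2) .
    have "connected_up_to_flip0 k n p (permute_list ?t (flip_coord k 0 v))"
      using swap 2 flip_coord_in_positions assms(2,5) by blast
    then have "connected_up_to_flip0 k n p (flip_coord k ?a (permute_list ?t v))"
      using permute_list_transpose_flip_coord assms(2-4) by (metis positions_iff_nth gr_implies_not0 neq0_conv)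
    then have "connected_up_to_flip0 k n p (flip_coord k ?a (flip_coord k ?a (permute_list ?t v)))"
      using connected_up_to_flip0_flip_coord flip_coord_in_positions tv a assms(5) by blast
    then show ?thesis using flip_coord_flip_coord tv by metis
  qed
qed

lemma connected_up_to_flip0_permute_list:
  assumes "\<pi> permutes {..<n}" "connected_up_to_flip0 k n p v" "v \<in> positions k n" "k \<ge> 1"
  shows "connected_up_to_flip0 k n p (permute_list \<pi> v)"
  using finite_lessThan assms(1)
proof (induction rule: permutes_rev_induct)
  case id
  then show ?case using assms(2) by simp
next
  case (swap a b \<sigma>)
  have "Transposition.transpose a b permutes {..<length v}"
    using swap.hyps(1,2) assms(3) by (simp add: permutes_swap_id positions_iff_nth)
  then have compose: "permute_list (\<sigma> \<circ> Transposition.transpose a b) v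
      = permute_list (Transposition.transpose a b) (permute_list \<sigma> v)"
    by (rule permute_list_compose)
  have "permute_list \<sigma> v \<in> positions k n"
    using permute_list_in_positions swap.hyps(4) assms(3) .
  then show ?case unfolding compose
    using connected_up_to_flip0_transpose swap.IH swap.hyps(1,2) assms(4) by blast
qed

section \<open>The multiset of bar-values\<close>

lemma bar_le: "bar k x \<le> x"
  by (simp add: bar_def)

lemma bar_interior_ge_1: "x < k \<Longrightarrow> x \<noteq> 0 \<Longrightarrow> x \<noteq> k - 1 \<Longrightarrow> bar k x \<ge> 1"
  by (auto simp: bar_def)

lemma bar_middle: "2 * x = k - 1 \<Longrightarrow> bar k x = x"
  by (auto simp: bar_def)

lemma map_bar_in_positions: "p \<in> positions k n \<Longrightarrow> map (bar k) p \<in> positions k n"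
  by (auto simp: positions_iff_nth intro: le_less_trans[OF bar_le])

lemma connected_up_to_flip0_map_bar:
  assumes "p \<in> positions k n" "k \<ge> 1"
  shows "connected_up_to_flip0 k n p (map (bar k) p)"
proof -
  define g where "g t = map (\<lambda>i. if i < t then bar k (p ! i) else p ! i) [0..<n]" for t
  have g_pos: "g t \<in> positions k n" for t
    using assms(1) by (auto simp: g_def positions_iff_nth intro: le_less_trans[OF bar_le])
  have "connected_up_to_flip0 k n p (g t)" for t
  proof (induction t)
    case 0
    have "g 0 = p" using assms(1) by (auto simp: g_def positions_iff_nth intro: nth_equalityI)
    then show ?case by (simp add: connected_up_to_flip0_def connected_pos_refl)
  next
    case (Suc t)
    show ?case
    proof (cases "t < n \<and> bar k (p ! t) \<noteq> p ! t")
      case True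
      then have "g (Suc t) = flip_coord k t (g t)"
        by (auto simp: g_def flip_coord_def bar_def nth_list_update intro!: nth_equalityI)
      then show ?thesis using connected_up_to_flip0_flip_coord Suc.IH g_pos True assms(2) by simp
    next
      case False
      then have "g (Suc t) = g t" by (auto simp: g_def less_Suc_eq intro!: nth_equalityI)
      then show ?thesis using Suc.IH by simp
    qed
  qed
  moreover have "g n = map (bar k) p"
    using assms(1) by (auto simp: g_def positions_iff_nth intro!: nth_equalityI)
  ultimately show ?thesis by metis
qed

lemma connected_up_to_flip0_sort_map_bar:
  assumes "p \<in> positions k n" "k \<ge> 1"
  shows "connected_up_to_flip0 k n p (sort (map (bar k) p))"
proof -
  obtain \<pi> where "\<pi> permutes {..<length (map (bar k) p)}"
    "permute_list \<pi> (map (bar k) p) = sort (map (bar k) p)"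
    using mset_eq_permutation[of "sort (map (bar k) p)" "map (bar k) p"] by auto
  then show ?thesis
    using connected_up_to_flip0_permute_list connected_up_to_flip0_map_bar map_bar_in_positions assms
    by (metis positions_iff_nth)
qed

lemma mset_map_bar:
  assumes "p \<in> positions k n"
  shows "mset (map (bar k) p) = replicate_mset (card (bdry k p)) 0
    + image_mset (\<lambda>i. bar k (p ! i)) (mset_set ({0..<n} - bdry k p))"
proof -
  let ?B = "bdry k p"
  have B: "?B \<subseteq> {0..<n}" using assms by (auto simp: bdry_def positions_iff_nth)
  have "map (bar k) p = map (\<lambda>i. bar k (p ! i)) [0..<n]"
    using assms by (auto simp: positions_iff_nth intro!: nth_equalityI)
  then have "mset (map (bar k) p) = image_mset (\<lambda>i. bar k (p ! i)) (mset_set {0..<n})" by simp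
  moreover have "mset_set {0..<n} = mset_set ?B + mset_set ({0..<n} - ?B)"
    using B by (metis Diff_disjoint Un_Diff_cancel2 Un_absorb1 finite_Diff finite_atLeastLessThan
      finite_subset mset_set_Union sup_commute)
  moreover have "image_mset (\<lambda>i. bar k (p ! i)) (mset_set ?B) = image_mset (\<lambda>i. 0) (mset_set ?B)"
    by (rule image_mset_cong) (auto simp: bdry_def bar_def)
  ultimately show ?thesis by (simp add: image_mset_const_eq)
qed

lemma bar_interior_multiset_ge_1:
  assumes "p \<in> positions k n" "x \<in># image_mset (\<lambda>i. bar k (p ! i)) (mset_set ({0..<n} - bdry k p))"
  shows "x \<ge> 1"
proof -
  obtain i where i: "i < n" "i \<notin> bdry k p" "x = bar k (p ! i)" using assms(2) by auto
  then have "p ! i < k" "p ! i \<noteq> 0" "p ! i \<noteq> k - 1"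
    using assms(1) by (auto simp: bdry_def positions_iff_nth)
  then show ?thesis using i(3) bar_interior_ge_1 by simp
qed

lemma Tset_params_nonzero: "p \<in> Tset k n m js \<Longrightarrow> 0 \<notin> set js"
  unfolding Tset_def using bar_interior_multiset_ge_1 by (metis (mono_tags) mem_Collect_eq
    not_one_le_zero set_mset_mset)

lemma Tset_iff_mset_map_bar:
  assumes "0 \<notin> set js"
  shows "p \<in> Tset k n m js \<longleftrightarrow>
    p \<in> positions k n \<and> mset (map (bar k) p) = replicate_mset m 0 + mset js"
proof
  assume "p \<in> Tset k n m js"
  then show "p \<in> positions k n \<and> mset (map (bar k) p) = replicate_mset m 0 + mset js"
    unfolding Tset_def using mset_map_bar by auto
next
  assume p: "p \<in> positions k n \<and> mset (map (bar k) p) = replicate_mset m 0 + mset js"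
  let ?I = "image_mset (\<lambda>i. bar k (p ! i)) (mset_set ({0..<n} - bdry k p))"
  have eq: "replicate_mset (card (bdry k p)) 0 + ?I = replicate_mset m 0 + mset js"
    using p mset_map_bar by metis
  have "count ?I 0 = 0" using bar_interior_multiset_ge_1 p by (metis count_inI not_one_le_zero)
  moreover have "count (mset js) 0 = 0" using assms by (simp add: count_mset_0_iff)
  ultimately have "card (bdry k p) = m" using arg_cong[OF eq, of "\<lambda>M. count M 0"] by simp
  then show "p \<in> Tset k n m js" unfolding Tset_def using p eq by simp
qed

lemma sort_map_bar_Tset:
  assumes "p \<in> Tset k n m js" "sorted js"
  shows "sort (map (bar k) p) = replicate m 0 @ js"
  using assms Tset_iff_mset_map_bar[OF Tset_params_nonzero[OF assms(1)]]
  by (intro properties_for_sort) (auto simp: sorted_append)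

lemma map_bar_psi:
  assumes "p \<in> positions k n" "i < n" "j < n" "i \<noteq> j"
  shows "map (bar k) (psi k i j p) = permute_list (Transposition.transpose i j) (map (bar k) p)"
  using assms
  by (intro nth_equalityI) (auto simp: psi_def permute_list_def nth_list_update bar_def positions_iff_nth)

lemma connected_pos_mset_map_bar:
  assumes "connected_pos k n p q" "p \<in> positions k n" "k \<ge> 1"
  shows "mset (map (bar k) q) = mset (map (bar k) p)"
proof (rule connected_pos_induct[where P = "\<lambda>x. mset (map (bar k) x) = mset (map (bar k) p)", OF assms])
  fix x i j
  assume x: "x \<in> positions k n" "mset (map (bar k) x) = mset (map (bar k) p)" "i < n" "j < n" "i \<noteq> j"
  then have "Transposition.transpose i j permutes {..<length (map (bar k) x)}"
    by (simp add: permutes_swap_id positions_iff_nth)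
  then show "mset (map (bar k) (psi k i j x)) = mset (map (bar k) p)"
    unfolding map_bar_psi[OF x(1,3-5)] mset_permute_list using x(2) by simp
qed simp

lemma connected_pos_Tset:
  assumes "p \<in> Tset k n m js" "connected_pos k n p q" "k \<ge> 1"
  shows "q \<in> Tset k n m js"
  using assms connected_pos_mset_map_bar connected_pos_in_positions
    Tset_iff_mset_map_bar[OF Tset_params_nonzero[OF assms(1)]] by metis

section \<open>The sign invariant\<close>

definition upper_sign :: "nat \<Rightarrow> nat list \<Rightarrow> int" where
  "upper_sign k p = (\<Prod>x\<leftarrow>p. if k - 1 < 2 * x then -1 else 1)"

lemma upper_sign_below_middle: "\<forall>x\<in>set xs. 2 * x < k - 1 \<Longrightarrow> upper_sign k xs = 1"
  unfolding upper_sign_def by (induction xs) auto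

lemma prod_list_update:
  fixes xs :: "'a :: comm_monoid_mult list"
  shows "i < length xs \<Longrightarrow> prod_list (xs[i := y]) * xs ! i = prod_list xs * y"
  by (induction xs arbitrary: i) (auto simp: mult_ac split: nat.split)

lemma upper_sign_permute_list:
  "\<pi> permutes {..<length p} \<Longrightarrow> upper_sign k (permute_list \<pi> p) = upper_sign k p"
  unfolding upper_sign_def by (metis mset_map mset_permute_list prod_mset_prod_list)

lemma upper_sign_flip_coord:
  assumes "i < length p" "p ! i < k" "2 * p ! i \<noteq> k - 1"
  shows "upper_sign k (flip_coord k i p) = - upper_sign k p"
proof -
  define f :: "nat \<Rightarrow> int" where "f = (\<lambda>x. if k - 1 < 2 * x then -1 else 1)"
  have "f (k - 1 - p ! i) = - f (p ! i)" using assms(2,3) by (auto simp: f_def)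
  moreover have "f (p ! i) * f (p ! i) = 1" by (simp add: f_def)
  moreover have "prod_list ((map f p)[i := f (k - 1 - p ! i)]) * f (p ! i)
      = prod_list (map f p) * f (k - 1 - p ! i)"
    using prod_list_update[of i "map f p"] assms(1) by simp
  ultimately have "prod_list ((map f p)[i := f (k - 1 - p ! i)]) = - prod_list (map f p)"
    by (metis mult.assoc mult.right_neutral mult_minus_left mult_minus_right)
  moreover have "upper_sign k r = prod_list (map f r)" for r by (simp add: upper_sign_def f_def)
  ultimately show ?thesis by (simp add: flip_coord_def map_update)
qed

lemma upper_sign_psi:
  assumes "p \<in> positions k n" "i < n" "j < n" "i \<noteq> j" "2 * p ! j \<noteq> k - 1"
  shows "upper_sign k (psi k i j p) = - upper_sign k p"
proof -
  let ?t = "Transposition.transpose i j"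
  have t: "?t permutes {..<length p}" using assms by (simp add: permutes_swap_id positions_iff_nth)
  have "permute_list ?t p ! i = p ! j" using assms by (simp add: permute_list_def positions_iff_nth)
  then show ?thesis
    using assms upper_sign_flip_coord[of i "permute_list ?t p" k] upper_sign_permute_list[OF t]
    by (simp add: psi_eq_flip_coord_transpose positions_iff_nth)
qed

lemma permute_list_fixes_distinct:
  assumes "\<sigma> permutes {..<length xs}" "distinct xs" "permute_list \<sigma> xs = xs"
  shows "\<sigma> = id"
proof
  fix i show "\<sigma> i = id i"
  proof (cases "i < length xs")
    case True
    then have "xs ! \<sigma> i = xs ! i" using assms(1,3) permute_list_nth by metis
    moreover have "\<sigma> i < length xs" using permutes_in_image assms(1) True by fastforce
    ultimately show ?thesis using assms(2) True nth_eq_iff_index_eq by fastforce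
  next
    case False
    then show ?thesis using permutes_not_in assms(1) by fastforce
  qed
qed

lemma connected_pos_sign_permutation:
  assumes "connected_pos k n p q" "p \<in> positions k n" "k \<ge> 1"
    and no_middle: "\<forall>r\<in>set (map (bar k) p). 2 * r \<noteq> k - 1"
  shows "\<exists>\<sigma>. \<sigma> permutes {..<n} \<and> permute_list \<sigma> (map (bar k) p) = map (bar k) q
    \<and> sign \<sigma> * upper_sign k q = upper_sign k p"
proof (rule connected_pos_induct[OF assms(1-3)])
  show "\<exists>\<sigma>. \<sigma> permutes {..<n} \<and> permute_list \<sigma> (map (bar k) p) = map (bar k) p
      \<and> sign \<sigma> * upper_sign k p = upper_sign k p"
    by (intro exI[of _ id]) (simp add: permutes_id sign_id)
next
  fix x i j
  assume x: "x \<in> positions k n" "i < n" "j < n" "i \<noteq> j"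
    and "\<exists>\<sigma>. \<sigma> permutes {..<n} \<and> permute_list \<sigma> (map (bar k) p) = map (bar k) x
      \<and> sign \<sigma> * upper_sign k x = upper_sign k p"
  then obtain \<sigma> where \<sigma>: "\<sigma> permutes {..<n}" "permute_list \<sigma> (map (bar k) p) = map (bar k) x"
    "sign \<sigma> * upper_sign k x = upper_sign k p" by blast
  let ?t = "Transposition.transpose i j"
  have t: "?t permutes {..<n}" using x by (simp add: permutes_swap_id)
  have lengths: "length (map (bar k) p) = n" "length (map (bar k) x) = n"
    using assms(2) x(1) by (simp_all add: positions_iff_nth)
  have "bar k (x ! j) \<in> set (map (bar k) p)"
    using \<sigma>(1,2) x(1,3) lengths by (metis nth_map nth_mem set_permute_list positions_iff_nth)
  then have "2 * x ! j \<noteq> k - 1" using no_middle bar_middle by metis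
  then have "upper_sign k (psi k i j x) = - upper_sign k x" using upper_sign_psi x by blast
  moreover have "sign (\<sigma> \<circ> ?t) = - sign \<sigma>"
    using sign_compose[of \<sigma> ?t] sign_swap_id[of i j] x(4) \<sigma>(1) t
    by (metis finite_lessThan mult_minus1_right permutation_permutes)
  moreover have "permute_list (\<sigma> \<circ> ?t) (map (bar k) p) = map (bar k) (psi k i j x)"
    using permute_list_compose[of ?t "map (bar k) p" \<sigma>] t lengths \<sigma>(2) map_bar_psi x by simp
  ultimately show "\<exists>\<sigma>'. \<sigma>' permutes {..<n}
      \<and> permute_list \<sigma>' (map (bar k) p) = map (bar k) (psi k i j x)
      \<and> sign \<sigma>' * upper_sign k (psi k i j x) = upper_sign k p"
    using \<sigma>(1,3) t permutes_compose by (intro exI[of _ "\<sigma> \<circ> ?t"]) auto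
qed

lemma connected_pos_same_bars_upper_sign:
  assumes "connected_pos k n p q" "p \<in> positions k n" "k \<ge> 1"
    "distinct (map (bar k) p)" "\<forall>r\<in>set (map (bar k) p). 2 * r \<noteq> k - 1"
    "map (bar k) q = map (bar k) p"
  shows "upper_sign k q = upper_sign k p"
proof -
  obtain \<sigma> where \<sigma>: "\<sigma> permutes {..<n}" "permute_list \<sigma> (map (bar k) p) = map (bar k) p"
    "sign \<sigma> * upper_sign k q = upper_sign k p"
    using connected_pos_sign_permutation[OF assms(1-3,5)] assms(6) by auto
  have "\<sigma> = id"
    using permute_list_fixes_distinct \<sigma>(1,2) assms(2,4) by (metis length_map positions_iff_nth)
  then show ?thesis using \<sigma>(3) by (simp add: sign_id)
qed

section \<open>The connectivity classes\<close>

lemma admissibleD: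
  assumes "admissible k n m js"
  shows "sorted js" "length js = n - m" "1 \<le> m" "m \<le> n" "\<forall>j\<in>set js. bar k j = j"
  using assms unfolding admissible_def by (auto simp: bar_def)

lemma canonical_in_Tset:
  assumes "admissible k n m js" "k \<ge> 2"
  shows "replicate m 0 @ js \<in> Tset k n m js"
proof -
  have js: "0 \<notin> set js" "\<forall>j\<in>set js. j < k" using assms unfolding admissible_def by auto
  have "map (bar k) js = js" using admissibleD(5)[OF assms(1)] by (simp add: map_idI)
  then have "mset (map (bar k) (replicate m 0 @ js)) = replicate_mset m 0 + mset js"
    by (simp add: bar_def)
  moreover have "replicate m 0 @ js \<in> positions k n"
    using admissibleD[OF assms(1)] js(2) assms(2) by (auto simp: positions_def)
  ultimately show ?thesis using Tset_iff_mset_map_bar[OF js(1)] by blast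
qed

lemma Tset_connected_to_canonical:
  assumes "q \<in> Tset k n m js" "sorted js" "k \<ge> 1"
  shows "connected_pos k n q (replicate m 0 @ js)
    \<or> connected_pos k n q (flip_coord k 0 (replicate m 0 @ js))"
  using connected_up_to_flip0_sort_map_bar[of q k n] sort_map_bar_Tset[OF assms(1,2)] assms
  by (simp add: Tset_def connected_up_to_flip0_def)

lemma connected_component_in_conn_classes:
  assumes "c \<in> Tset k n m js" "k \<ge> 1"
  shows "{q \<in> Tset k n m js. connected_pos k n c q} \<in> conn_classes k n"
proof -
  have c: "c \<in> positions k n" using assms(1) by (simp add: Tset_def)
  have "{q \<in> Tset k n m js. connected_pos k n c q} = conn_rel k n `` {c}"
  proof (intro equalityI subsetI)
    fix q assume "q \<in> {q \<in> Tset k n m js. connected_pos k n c q}"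
    then show "q \<in> conn_rel k n `` {c}" using c by (simp add: conn_rel_def Tset_def)
  next
    fix q assume "q \<in> conn_rel k n `` {c}"
    then show "q \<in> {q \<in> Tset k n m js. connected_pos k n c q}"
      using connected_pos_Tset assms by (simp add: conn_rel_def)
  qed
  then show ?thesis unfolding conn_classes_def using c by (simp add: quotientI)
qed

lemma connected_pos_flip_equal_coord:
  assumes "c \<in> positions k n" "x < n" "y < n" "x \<noteq> y" "c ! x = c ! y"
  shows "connected_pos k n c (flip_coord k x c)"
proof -
  have "psi k x y c = flip_coord k x c"
    using assms by (intro nth_equalityI) (auto simp: psi_def flip_coord_def nth_list_update positions_iff_nth)
  then show ?thesis using connected_pos_psi assms by metis
qed

lemma connected_pos_flip_coord_0:
  assumes "v \<in> positions k n" "x < n" "x \<noteq> 0" "connected_pos k n v (flip_coord k x v)" "k \<ge> 1"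
  shows "connected_pos k n v (flip_coord k 0 v)"
proof -
  let ?w = "flip_coord k x v"
  have "?w \<in> positions k n" using flip_coord_in_positions assms(1,5) .
  then have "connected_pos k n ?w (flip_coord k x (flip_coord k 0 ?w))"
    using connected_pos_flip_coord_pair assms(2,3,5) by auto
  then show ?thesis
    using assms(1,4) connected_pos_trans flip_coord_commute flip_coord_flip_coord by metis
qed

lemma canonical_connected_flip_coord_0:
  assumes "admissible k n m js" "\<not> exceptional k m js" "k \<ge> 2"
  defines "c \<equiv> replicate m 0 @ js"
  shows "connected_pos k n c (flip_coord k 0 c)"
proof -
  note adm = admissibleD[OF assms(1)]
  have c: "c \<in> positions k n" using canonical_in_Tset assms(1,3) by (simp add: c_def Tset_def)
  have len: "length c = n" using c by (simp add: positions_iff_nth)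
  have "\<exists>x<n. x \<noteq> 0 \<and> connected_pos k n c (flip_coord k x c)"
  proof (cases "m \<ge> 2")
    case True
    then have "c ! 1 = c ! 0" by (simp add: c_def nth_append)
    then show ?thesis
      using connected_pos_flip_equal_coord[OF c, of 1 0] True adm(4) by (intro exI[of _ 1]) auto
  next
    case False
    then have "m = 1" using adm(3) by simp
    then have c0: "c = 0 # js" by (simp add: c_def)
    show ?thesis
    proof (cases "sorted_wrt (<) js")
      case False
      then obtain i j where ij: "i < j" "j < length js" "\<not> js ! i < js ! j"
        unfolding sorted_wrt_iff_nth_less by blast
      moreover have "js ! i \<le> js ! j" using ij(1,2) adm(1) by (simp add: sorted_iff_nth_mono)
      ultimately have "c ! Suc i = c ! Suc j" using c0 by simp
      then show ?thesis
        using connected_pos_flip_equal_coord[OF c, of "Suc i" "Suc j"] ij len c0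
        by (intro exI[of _ "Suc i"]) auto
    next
      case True
      then obtain j where j: "j \<in> set js" "\<not> 2 * j < k - 1"
        using assms(2) \<open>m = 1\<close> by (auto simp: exceptional_def)
      moreover have "j \<le> (k - 1) div 2" using j(1) assms(1) by (simp add: admissible_def)
      ultimately have "2 * j = k - 1" by presburger
      obtain i where i: "i < length js" "js ! i = j" using j(1) by (auto simp: in_set_conv_nth)
      have "k - 1 - j = j" using \<open>2 * j = k - 1\<close> by simp
      then have "flip_coord k (Suc i) c = c" using i(1) c0 by (simp add: flip_coord_def flip: i(2))
      then show ?thesis using i(1) len c0 connected_pos_refl by (intro exI[of _ "Suc i"]) auto
    qed
  qed
  then show ?thesis using connected_pos_flip_coord_0[OF c] assms(3) by auto
qed

theorem Tset_in_conn_classes: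
  assumes "admissible k n m js" "\<not> exceptional k m js" "k \<ge> 2"
  shows "Tset k n m js \<in> conn_classes k n"
proof -
  define c where "c = replicate m 0 @ js"
  have k1: "k \<ge> 1" using assms(3) by simp
  have cT: "c \<in> Tset k n m js" using canonical_in_Tset assms(1,3) by (simp add: c_def)
  then have c: "c \<in> positions k n" by (simp add: Tset_def)
  have "connected_pos k n c (flip_coord k 0 c)"
    unfolding c_def using canonical_connected_flip_coord_0[OF assms] .
  then have flip_to_c: "connected_pos k n (flip_coord k 0 c) c" using connected_pos_sym c k1 by blast
  have "connected_pos k n c q" if q: "q \<in> Tset k n m js" for q
  proof -
    have "connected_pos k n q c \<or> connected_pos k n q (flip_coord k 0 c)"
      unfolding c_def using Tset_connected_to_canonical[OF q admissibleD(1)[OF assms(1)] k1] .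
    then have "connected_pos k n q c" using flip_to_c connected_pos_trans by blast
    moreover have "q \<in> positions k n" using q by (simp add: Tset_def)
    ultimately show ?thesis using connected_pos_sym k1 by blast
  qed
  then have "Tset k n m js = {q \<in> Tset k n m js. connected_pos k n c q}" by blast
  then show ?thesis using connected_component_in_conn_classes[OF cT k1] by simp
qed

lemma exceptional_canonical_not_connected:
  assumes "admissible k n 1 js" "exceptional k 1 js" "k \<ge> 2"
  shows "\<not> connected_pos k n (0 # js) ((k - 1) # js)"
proof
  assume conn: "connected_pos k n (0 # js) ((k - 1) # js)"
  have js: "sorted_wrt (<) js" "\<forall>j\<in>set js. 2 * j < k - 1"
    using assms(2) by (auto simp: exceptional_def)
  have c: "0 # js \<in> positions k n" using canonical_in_Tset[OF assms(1,3)] by (simp add: Tset_def)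
  have "map (bar k) js = js" using admissibleD(5)[OF assms(1)] by (simp add: map_idI)
  then have bars: "map (bar k) (0 # js) = 0 # js" "map (bar k) ((k - 1) # js) = 0 # js"
    by (simp_all add: bar_def)
  have "distinct (0 # js)" using js(1) assms(1) by (auto simp: admissible_def strict_sorted_iff)
  moreover have "\<forall>r\<in>set (0 # js). 2 * r \<noteq> k - 1" using js(2) assms(3) by auto
  ultimately have "upper_sign k ((k - 1) # js) = upper_sign k (0 # js)"
    using assms(3) by (intro connected_pos_same_bars_upper_sign[OF conn c]) (simp_all only: bars)
  moreover have "upper_sign k (0 # js) = 1"
    using js(2) assms(3) by (simp add: upper_sign_below_middle)
  moreover have "upper_sign k ((k - 1) # js) = -1"
    using upper_sign_below_middle[OF js(2)] assms(3) by (simp add: upper_sign_def)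
  ultimately show False by simp
qed

theorem exceptional_Tset_two_classes:
  assumes "admissible k n m js" "exceptional k m js" "k \<ge> 2"
  shows "let A = {q \<in> Tset k n m js. connected_pos k n (0 # js) q} in
    A \<in> conn_classes k n \<and> Tset k n m js - A \<in> conn_classes k n \<and> (k - 1) # js \<in> Tset k n m js - A"
proof -
  let ?T = "Tset k n m js"
  let ?A = "{q \<in> ?T. connected_pos k n (0 # js) q}"
  have m: "m = 1" using assms(2) by (simp add: exceptional_def)
  have k1: "k \<ge> 1" using assms(3) by simp
  have cT: "0 # js \<in> ?T" using canonical_in_Tset[OF assms(1,3)] m by simp
  have flip: "flip_coord k 0 (0 # js) = (k - 1) # js" by (simp add: flip_coord_def)
  have c'p: "(k - 1) # js \<in> positions k n"
    using flip_coord_in_positions[of "0 # js" k n 0] cT k1 flip by (simp add: Tset_def)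
  have "mset (map (bar k) ((k - 1) # js)) = mset (map (bar k) (0 # js))" by (simp add: bar_def)
  then have c'T: "(k - 1) # js \<in> ?T"
    using cT c'p Tset_iff_mset_map_bar[OF Tset_params_nonzero[OF cT]] by metis
  have not_conn: "\<not> connected_pos k n (0 # js) ((k - 1) # js)"
    using exceptional_canonical_not_connected assms m by simp
  have complement: "?T - ?A = {q \<in> ?T. connected_pos k n ((k - 1) # js) q}"
  proof (intro equalityI subsetI)
    fix q assume q: "q \<in> ?T - ?A"
    then have qp: "q \<in> positions k n" by (simp add: Tset_def)
    have "connected_pos k n q (0 # js) \<or> connected_pos k n q ((k - 1) # js)"
      using Tset_connected_to_canonical[OF DiffD1[OF q] admissibleD(1)[OF assms(1)] k1] m flip
      by simp
    moreover have "\<not> connected_pos k n q (0 # js)"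
      using connected_pos_sym[OF _ qp k1, of "0 # js"] q by blast
    ultimately show "q \<in> {q \<in> ?T. connected_pos k n ((k - 1) # js) q}"
      using connected_pos_sym[OF _ qp k1, of "(k - 1) # js"] q by blast
  next
    fix q assume q: "q \<in> {q \<in> ?T. connected_pos k n ((k - 1) # js) q}"
    then have "connected_pos k n q ((k - 1) # js)" using connected_pos_sym c'p k1 by blast
    then have "\<not> connected_pos k n (0 # js) q" using not_conn connected_pos_trans by blast
    then show "q \<in> ?T - ?A" using q by blast
  qed
  show ?thesis
    unfolding Let_def complement
    using connected_component_in_conn_classes[OF cT k1] connected_component_in_conn_classes[OF c'T k1]
      c'T connected_pos_refl by blast
qed

section \<open>The partition into T-sets\<close>

lemma card_bdry_le:
  assumes "p \<in> positions k n"
  shows "card (bdry k p) \<le> n"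
proof -
  have "bdry k p \<subseteq> {0..<n}" using assms by (auto simp: bdry_def positions_iff_nth)
  then show ?thesis using card_mono[of "{0..<n}" "bdry k p"] by simp
qed

lemma Tset_disjoint:
  assumes "admissible k n m1 js1" "admissible k n m2 js2" "(m1, js1) \<noteq> (m2, js2)"
  shows "Tset k n m1 js1 \<inter> Tset k n m2 js2 = {}"
proof (rule ccontr)
  assume "Tset k n m1 js1 \<inter> Tset k n m2 js2 \<noteq> {}"
  then have "m1 = m2" "mset js1 = mset js2" unfolding Tset_def by auto
  moreover have "js1 = js2"
    using admissibleD(1)[OF assms(1)] admissibleD(1)[OF assms(2)] \<open>mset js1 = mset js2\<close>
    by (metis properties_for_sort sorted_sort_id)
  ultimately show False using assms(3) by simp
qed

lemma external_positions_eq_Union_Tset: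
  "{p \<in> positions k n. bdry k p \<noteq> {}} = (\<Union>(m, js)\<in>{(m, js). admissible k n m js}. Tset k n m js)"
proof (intro equalityI subsetI)
  fix p assume "p \<in> {p \<in> positions k n. bdry k p \<noteq> {}}"
  then have p: "p \<in> positions k n" "bdry k p \<noteq> {}" by auto
  let ?B = "bdry k p"
  let ?I = "image_mset (\<lambda>i. bar k (p ! i)) (mset_set ({0..<n} - ?B))"
  define js where "js = sorted_list_of_multiset ?I"
  have B: "?B \<subseteq> {0..<n}" using p(1) by (auto simp: bdry_def positions_iff_nth)
  then have fin: "finite ?B" using finite_subset by blast
  have js_mset: "mset js = ?I" by (simp add: js_def)
  have "admissible k n (card ?B) js"
    unfolding admissible_def
  proof (intro conjI)
    show "1 \<le> card ?B" using p(2) fin by (simp add: Suc_leI card_gt_0_iff)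
    show "card ?B \<le> n" using card_bdry_le p(1) .
    have "length js = card ({0..<n} - ?B)" by (metis js_mset size_mset size_image_mset size_mset_set)
    then show "length js = n - card ?B" using B fin by (simp add: card_Diff_subset)
    show "sorted js" by (simp add: js_def)
    show "\<forall>j\<in>set js. 1 \<le> j \<and> j \<le> (k - 1) div 2"
    proof
      fix j assume "j \<in> set js"
      then have j: "j \<in># ?I" using js_mset by (metis set_mset_mset)
      then obtain i where "i < n" "j = bar k (p ! i)" by auto
      then have "2 * j \<le> k - 1" using p(1) by (auto simp: bar_def positions_iff_nth)
      moreover have "1 \<le> j" using bar_interior_multiset_ge_1[OF p(1) j] .
      ultimately show "1 \<le> j \<and> j \<le> (k - 1) div 2" by presburger
    qed
  qed
  moreover have "p \<in> Tset k n (card ?B) js" unfolding Tset_def using p(1) js_mset by simp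
  ultimately show "p \<in> (\<Union>(m, js)\<in>{(m, js). admissible k n m js}. Tset k n m js)" by blast
next
  fix p assume "p \<in> (\<Union>(m, js)\<in>{(m, js). admissible k n m js}. Tset k n m js)"
  then obtain m js where "admissible k n m js" "p \<in> Tset k n m js" by blast
  then have "p \<in> positions k n" "card (bdry k p) = m" "1 \<le> m"
    by (simp_all add: Tset_def admissible_def)
  then show "p \<in> {p \<in> positions k n. bdry k p \<noteq> {}}" by auto
qed

lemma exceptional_params_bound:
  assumes "n \<ge> 2" "length js = n - 1" "distinct js" "\<forall>j\<in>set js. 1 \<le> j \<and> 2 * j < k - 1"
  shows "2 * n \<le> k"
proof -
  have "set js \<subseteq> {1..(k - 2) div 2}"
  proof
    fix j assume "j \<in> set js"
    then have "1 \<le> j" "2 * j \<le> k - 2" using assms(4) by auto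
    then show "j \<in> {1..(k - 2) div 2}" unfolding atLeastAtMost_iff by presburger
  qed
  then have "card (set js) \<le> (k - 2) div 2" using card_mono[OF finite_atLeastAtMost, of "set js" 1 "(k - 2) div 2"] by simp
  then have "n - 1 \<le> (k - 2) div 2" using distinct_card[OF assms(3)] assms(2) by simp
  then show ?thesis using assms(1) by linarith
qed

theorem mainTheorem1:
  fixes k n :: nat
  assumes "k \<ge> 2" and "n \<ge> 3"
  shows
    "positions k n = (\<Union>m\<in>{0..n}. {p \<in> positions k n. card (bdry k p) = m})
     \<and> (\<forall>m1 m2. m1 \<noteq> m2 \<longrightarrow>
          {p \<in> positions k n. card (bdry k p) = m1} \<inter> {p \<in> positions k n. card (bdry k p) = m2} = {})
     \<and> (\<forall>m1 js1 m2 js2. admissible k n m1 js1 \<and> admissible k n m2 js2 \<and> (m1, js1) \<noteq> (m2, js2)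
          \<longrightarrow> Tset k n m1 js1 \<inter> Tset k n m2 js2 = {})
     \<and> {p \<in> positions k n. bdry k p \<noteq> {}} = (\<Union>(m, js)\<in>{(m, js). admissible k n m js}. Tset k n m js)
     \<and> (\<forall>m js. admissible k n m js \<and> \<not> exceptional k m js \<longrightarrow> Tset k n m js \<in> conn_classes k n)
     \<and> (\<forall>m js. admissible k n m js \<and> exceptional k m js \<longrightarrow>
          (let A = {q \<in> Tset k n m js. connected_pos k n (0 # js) q} in
             A \<in> conn_classes k n \<and> Tset k n m js - A \<in> conn_classes k n
             \<and> (k - 1) # js \<in> Tset k n m js - A))
     \<and> ((\<exists>js. length js = n - 1 \<and> sorted_wrt (<) js \<and> (\<forall>j\<in>set js. 1 \<le> j \<and> 2 * j < k - 1))
          \<longrightarrow> k \<ge> 2 * n)"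
proof (intro conjI allI impI)
  show "positions k n = (\<Union>m\<in>{0..n}. {p \<in> positions k n. card (bdry k p) = m})"
    using card_bdry_le by fastforce
  show "{p \<in> positions k n. card (bdry k p) = m1} \<inter> {p \<in> positions k n. card (bdry k p) = m2} = {}"
    if "m1 \<noteq> m2" for m1 m2
    using that by blast
  show "Tset k n m1 js1 \<inter> Tset k n m2 js2 = {}"
    if "admissible k n m1 js1 \<and> admissible k n m2 js2 \<and> (m1, js1) \<noteq> (m2, js2)" for m1 js1 m2 js2
    using that Tset_disjoint by blast
  show "{p \<in> positions k n. bdry k p \<noteq> {}} = (\<Union>(m, js)\<in>{(m, js). admissible k n m js}. Tset k n m js)"
    by (rule external_positions_eq_Union_Tset)
  show "Tset k n m js \<in> conn_classes k n" if "admissible k n m js \<and> \<not> exceptional k m js" for m js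
    using that assms(1) Tset_in_conn_classes by blast
  show "let A = {q \<in> Tset k n m js. connected_pos k n (0 # js) q} in
      A \<in> conn_classes k n \<and> Tset k n m js - A \<in> conn_classes k n \<and> (k - 1) # js \<in> Tset k n m js - A"
    if "admissible k n m js \<and> exceptional k m js" for m js
    using that assms(1) exceptional_Tset_two_classes by blast
  show "k \<ge> 2 * n"
    if "\<exists>js. length js = n - 1 \<and> sorted_wrt (<) js \<and> (\<forall>j\<in>set js. 1 \<le> j \<and> 2 * j < k - 1)"
    using that exceptional_params_bound assms(2) by (auto simp: strict_sorted_iff)
qed

end
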